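(* For unknown single-minded bidders in a multi-unit auction with $m$ identical items, the following randomized mechanism obtains a $400$-approximation to the optimal social welfare (its expected welfare under truthful play is at least $\mathrm{OPT}/400$ on every instance). With probability $1/2$, run an ascending-price auction on the grand bundle of all $m$ items. With the remaining probability $1/2$: place each bidder independently in a set $S$ with probability $1/2$ and in $U$ otherwise; bidders in $S$ receive nothing and report their valuations; compute the optimal welfare $O$ achievable by allocating the items among bidders of $S$ only; then iterate over the bidders of $U$ in an arbitrary order, and let each purchase her preferred number of the remaining items at price $O/(10m)$ per item.
   Context: Bidder $i$ is single-minded: there are private $x_i\ge0$ and $d_i\in\{1,\dots,m\}$ with $v_i(q)=x_i$ if $q\ge d_i$ and $v_i(q)=0$ otherwise; utilities are quasi-linear. $\mathrm{OPT}$ is the maximum of $\sum_iv_i(q_i)$ over nonnegative integers with $\sum_iq_i\le m$. In the ascending auction on the grand bundle, the highest-value bidder wins all items. The expectation is over the mechanism's randomness. *)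

theory Defs
  imports Complex_Main
begin

text \<open>Bidders are indexed by 0..<n. Bidder i is single-minded with value x i and demand d i:
  her value for q items is x i if q >= d i and 0 otherwise.\<close>

definition val :: "(nat \<Rightarrow> real) \<Rightarrow> (nat \<Rightarrow> nat) \<Rightarrow> nat \<Rightarrow> nat \<Rightarrow> real" where
  "val x d i q = (if d i \<le> q then x i else 0)"

definition opt_on :: "(nat \<Rightarrow> real) \<Rightarrow> (nat \<Rightarrow> nat) \<Rightarrow> nat \<Rightarrow> nat set \<Rightarrow> real" where
  "opt_on x d m A = Max {(\<Sum>i\<in>A. val x d i (q i)) | q :: nat \<Rightarrow> nat. sum q A \<le> m}"

text \<open>Welfare of the ascending auction on the grand bundle: the highest-value bidder
  wins all m items.\<close>
definition grand_bundle_welfare :: "(nat \<Rightarrow> real) \<Rightarrow> (nat \<Rightarrow> nat) \<Rightarrow> nat \<Rightarrow> nat \<Rightarrow> real" where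
  "grand_bundle_welfare x d m n = Max (insert 0 ((\<lambda>i. val x d i m) ` {..<n}))"

fun seq_welfare :: "(nat \<Rightarrow> real) \<Rightarrow> (nat \<Rightarrow> nat) \<Rightarrow> (nat \<Rightarrow> nat \<Rightarrow> nat) \<Rightarrow> nat list \<Rightarrow> nat \<Rightarrow> real" where
  "seq_welfare x d ch [] r = 0"
| "seq_welfare x d ch (i # is) r = val x d i (ch i r) + seq_welfare x d ch is (r - ch i r)"

definition price :: "(nat \<Rightarrow> real) \<Rightarrow> (nat \<Rightarrow> nat) \<Rightarrow> nat \<Rightarrow> nat set \<Rightarrow> real" where
  "price x d m S = opt_on x d m S / (10 * real m)"

definition preferred_choice :: "(nat \<Rightarrow> real) \<Rightarrow> (nat \<Rightarrow> nat) \<Rightarrow> nat \<Rightarrow> real \<Rightarrow> (nat \<Rightarrow> nat \<Rightarrow> nat) \<Rightarrow> bool" where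
  "preferred_choice x d n p ch \<longleftrightarrow>
     (\<forall>i<n. \<forall>r. ch i r \<le> r \<and>
        (\<forall>q\<le>r. val x d i q - p * real q \<le> val x d i (ch i r) - p * real (ch i r)))"

text \<open>Expected welfare: w.p. 1/2 grand bundle; w.p. 1/2 a uniformly random sample set
  S (each bidder independently w.p. 1/2), then sequential posted prices to U = rest in
  order ord S, with purchase rule ch S.\<close>
definition expected_welfare ::
  "(nat \<Rightarrow> real) \<Rightarrow> (nat \<Rightarrow> nat) \<Rightarrow> nat \<Rightarrow> nat \<Rightarrow> (nat set \<Rightarrow> nat list) \<Rightarrow> (nat set \<Rightarrow> nat \<Rightarrow> nat \<Rightarrow> nat) \<Rightarrow> real" where
  "expected_welfare x d m n ord ch =
     (1/2) * grand_bundle_welfare x d m n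
   + (1/2) * (\<Sum>S\<in>Pow {..<n}. (1/2) ^ n * seq_welfare x d (ch S) (ord S) m)"

end

theory Submission
  imports Defs
begin

(* Let P = OPT. If some bidder has value at least P/200, the grand-bundle auction alone
   yields P/400 in expectation. Otherwise take an optimal allocation and drop its (at most
   one) winner demanding more than m/2 items: the remaining winners W still have value
   V >= 199P/200. For a sample S, the sample optimum O lies between T = x(W \<inter> S) and P,
   so at the price O/(10m) either at least m/2 items are sold, earning at least T/20, or
   every winner of W outside S can afford her demand, giving welfare at least V - T - P/10.
   A concave quadratic in T below this minimum has expectation determined by E T = V/2 and
   Var T = (\<Sum>i\<in>W. x i^2)/4 <= PV/800, and is at least P/200 on average. *)

lemma sum_val_eq_sum_served:
  assumes "finite A"
  shows "(\<Sum>i\<in>A. val x d i (q i)) = sum x {i\<in>A. d i \<le> q i}"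
  using assms by (simp add: sum.inter_filter val_def)

lemma allocation_values_finite:
  assumes "finite A"
  shows "finite {(\<Sum>i\<in>A. val x d i (q i)) | q :: nat \<Rightarrow> nat. sum q A \<le> m}"
proof (rule finite_subset)
  show "{(\<Sum>i\<in>A. val x d i (q i)) | q :: nat \<Rightarrow> nat. sum q A \<le> m} \<subseteq> sum x ` Pow A"
    using assms by (auto simp: sum_val_eq_sum_served)
  show "finite (sum x ` Pow A)"
    using assms by simp
qed

lemma opt_on_ge:
  assumes "finite A" "sum q A \<le> m"
  shows "(\<Sum>i\<in>A. val x d i (q i)) \<le> opt_on x d m A"
  unfolding opt_on_def using assms allocation_values_finite[OF assms(1)] by (intro Max_ge) auto

lemma opt_on_attained:
  assumes "finite A"
  obtains q where "sum q A \<le> m" "opt_on x d m A = (\<Sum>i\<in>A. val x d i (q i))"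
proof -
  let ?X = "{(\<Sum>i\<in>A. val x d i (q i)) | q :: nat \<Rightarrow> nat. sum q A \<le> m}"
  have "(\<Sum>i\<in>A. val x d i 0) \<in> ?X"
    by force
  then have "Max ?X \<in> ?X"
    using allocation_values_finite[OF assms] by (intro Max_in) auto
  then show ?thesis
    using that unfolding opt_on_def by auto
qed

lemma opt_on_winners:
  assumes "finite A"
  obtains W where "W \<subseteq> A" "sum d W \<le> m" "opt_on x d m A = sum x W"
proof -
  obtain q where q: "sum q A \<le> m" "opt_on x d m A = (\<Sum>i\<in>A. val x d i (q i))"
    using opt_on_attained[OF assms] .
  let ?W = "{i\<in>A. d i \<le> q i}"
  have "sum d ?W \<le> sum q ?W"
    by (intro sum_mono) auto
  also have "\<dots> \<le> sum q A"
    using assms by (intro sum_mono2) auto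
  finally have "sum d ?W \<le> m"
    using q(1) by linarith
  moreover have "opt_on x d m A = sum x ?W"
    using q(2) unfolding sum_val_eq_sum_served[OF assms] .
  ultimately show ?thesis
    by (intro that[of ?W]) auto
qed

lemma sum_le_opt_on:
  assumes "finite A" "W \<subseteq> A" "sum d W \<le> m" "\<forall>i\<in>A. 1 \<le> d i"
  shows "sum x W \<le> opt_on x d m A"
proof -
  define q where "q i = (if i \<in> W then d i else 0)" for i
  have "sum q A = sum d W"
    using assms(1,2) by (simp add: q_def sum.If_cases Int_absorb1)
  moreover have "{i\<in>A. d i \<le> q i} = W"
    using assms(2,4) by (force simp: q_def)
  ultimately show ?thesis
    using opt_on_ge[OF assms(1), of q m x d] assms(1,3) by (simp add: sum_val_eq_sum_served)
qed

lemma opt_on_nonneg: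
  assumes "finite A" "\<forall>i\<in>A. 1 \<le> d i"
  shows "0 \<le> opt_on x d m A"
  using sum_le_opt_on[of A "{}"] assms by simp

lemma opt_on_mono:
  assumes "finite B" "A \<subseteq> B" "\<forall>i\<in>B. 1 \<le> d i"
  shows "opt_on x d m A \<le> opt_on x d m B"
proof -
  have "finite A"
    using assms(1,2) by (rule finite_subset[rotated])
  then obtain W where "W \<subseteq> A" "sum d W \<le> m" "opt_on x d m A = sum x W"
    by (rule opt_on_winners)
  then show ?thesis
    using sum_le_opt_on[of B W] assms by auto
qed

lemma opt_on_small_demand_winners:
  assumes "finite A" "0 \<le> \<epsilon>" "\<forall>i\<in>A. x i \<le> \<epsilon>"
  obtains W where "W \<subseteq> A" "sum d W \<le> m" "\<forall>i\<in>W. 2 * d i \<le> m"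
    "opt_on x d m A - \<epsilon> \<le> sum x W"
proof -
  obtain W0 where W0: "W0 \<subseteq> A" "sum d W0 \<le> m" "opt_on x d m A = sum x W0"
    using opt_on_winners[OF assms(1)] .
  have fin: "finite W0"
    using W0(1) assms(1) finite_subset by blast
  define W where "W = {i\<in>W0. 2 * d i \<le> m}"
  have at_most_one_large: "i = j" if "i \<in> W0 - W" "j \<in> W0 - W" for i j
  proof (rule ccontr)
    assume "i \<noteq> j"
    have "sum d {i, j} \<le> sum d W0"
      using that fin by (intro sum_mono2) auto
    moreover have "m < 2 * d i" "m < 2 * d j"
      using that by (auto simp: W_def)
    ultimately show False
      using \<open>i \<noteq> j\<close> W0(2) by simp
  qed
  have "sum x (W0 - W) \<le> \<epsilon>"
  proof (cases "W0 - W = {}")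
    case True
    then show ?thesis
      using assms(2) by (simp only: sum.empty)
  next
    case False
    then obtain i where "W0 - W = {i}"
      using at_most_one_large by blast
    then show ?thesis
      using assms(3) W0(1) by auto
  qed
  moreover have "sum x W0 = sum x (W0 - W) + sum x W"
    by (rule sum.subset_diff) (use fin in \<open>auto simp: W_def\<close>)
  moreover have "sum d W \<le> sum d W0"
    unfolding W_def by (rule sum_mono2[OF fin]) auto
  ultimately show ?thesis
    using W0 by (intro that[of W]) (auto simp: W_def)
qed

definition toggle :: "'a \<Rightarrow> 'a set \<Rightarrow> 'a set" where
  "toggle i S = (if i \<in> S then S - {i} else insert i S)"

definition rademacher :: "'a \<Rightarrow> 'a set \<Rightarrow> real" where
  "rademacher i S = (if i \<in> S then 1 else -1)"

lemma bij_betw_toggle: "i \<in> N \<Longrightarrow> bij_betw (toggle i) (Pow N) (Pow N)"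
  by (rule bij_betw_byWitness[where f' = "toggle i"]) (auto simp: toggle_def)

lemma sum_Pow_toggle_odd:
  fixes f :: "'a set \<Rightarrow> real"
  assumes "i \<in> N" "\<And>S. f (toggle i S) = - f S"
  shows "(\<Sum>S\<in>Pow N. f S) = 0"
proof -
  have "(\<Sum>S\<in>Pow N. f S) = (\<Sum>S\<in>Pow N. f (toggle i S))"
    using sum.reindex_bij_betw[OF bij_betw_toggle[OF assms(1)], of f] by simp
  also have "\<dots> = - (\<Sum>S\<in>Pow N. f S)"
    by (simp add: assms(2) sum_negf)
  finally show ?thesis
    by simp
qed

lemma sum_Pow_rademacher:
  "i \<in> N \<Longrightarrow> (\<Sum>S\<in>Pow N. rademacher i S) = 0"
  by (rule sum_Pow_toggle_odd) (auto simp: rademacher_def toggle_def)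

lemma sum_Pow_rademacher_mult:
  assumes "finite N" "i \<in> N"
  shows "(\<Sum>S\<in>Pow N. rademacher i S * rademacher j S) = (if i = j then 2 ^ card N else 0)"
proof (cases "i = j")
  case True
  then have "rademacher i S * rademacher j S = 1" for S
    by (simp add: rademacher_def)
  then show ?thesis
    using True assms(1) by (simp add: card_Pow)
next
  case False
  then show ?thesis
    using assms(2) by (simp, intro sum_Pow_toggle_odd) (auto simp: rademacher_def toggle_def)
qed

lemma sum_Int_deviation_eq_rademacher:
  fixes x :: "'a \<Rightarrow> real"
  assumes "finite W"
  shows "sum x (W \<inter> S) - sum x W / 2 = (\<Sum>i\<in>W. x i * rademacher i S) / 2"
proof -
  have "sum x (W \<inter> S) = (\<Sum>i\<in>W. if i \<in> S then x i else 0)"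
    using assms by (simp add: sum.inter_restrict)
  also have "\<dots> = (\<Sum>i\<in>W. (x i + x i * rademacher i S) / 2)"
    by (intro sum.cong) (auto simp: rademacher_def)
  finally show ?thesis
    by (simp add: sum.distrib sum_divide_distrib[symmetric])
qed

lemma sum_Pow_sum_Int:
  fixes x :: "'a \<Rightarrow> real"
  assumes "finite N" "W \<subseteq> N"
  shows "(\<Sum>S\<in>Pow N. sum x (W \<inter> S)) = 2 ^ card N * sum x W / 2"
proof -
  have fin: "finite W"
    using assms finite_subset by blast
  have "(\<Sum>S\<in>Pow N. sum x (W \<inter> S) - sum x W / 2) = (\<Sum>i\<in>W. x i * (\<Sum>S\<in>Pow N. rademacher i S)) / 2"
    unfolding sum_Int_deviation_eq_rademacher[OF fin]
    by (simp add: sum.swap[of _ "Pow N"] sum_distrib_left sum_divide_distrib[symmetric])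
  also have "\<dots> = 0"
    using assms(2) by (simp add: subsetD sum_Pow_rademacher)
  finally show ?thesis
    using assms(1) by (simp add: sum_subtractf card_Pow)
qed

lemma sum_Pow_sum_Int_deviation_squared:
  fixes x :: "'a \<Rightarrow> real"
  assumes "finite N" "W \<subseteq> N"
  shows "(\<Sum>S\<in>Pow N. (sum x (W \<inter> S) - sum x W / 2)\<^sup>2) = 2 ^ card N * (\<Sum>i\<in>W. (x i)\<^sup>2) / 4"
proof -
  have fin: "finite W"
    using assms finite_subset by blast
  have "(\<Sum>S\<in>Pow N. (sum x (W \<inter> S) - sum x W / 2)\<^sup>2)
      = (\<Sum>S\<in>Pow N. \<Sum>i\<in>W. \<Sum>j\<in>W. x i * x j * (rademacher i S * rademacher j S)) / 4"
    unfolding sum_Int_deviation_eq_rademacher[OF fin]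
    by (simp add: power2_eq_square sum_product sum_divide_distrib algebra_simps)
  also have "\<dots> = (\<Sum>i\<in>W. \<Sum>j\<in>W. x i * x j * (\<Sum>S\<in>Pow N. rademacher i S * rademacher j S)) / 4"
    by (simp add: sum.swap[of _ "Pow N"] sum_distrib_left)
  also have "\<dots> = (\<Sum>i\<in>W. x i * x i * 2 ^ card N) / 4"
    using assms fin by (simp add: subsetD sum_Pow_rademacher_mult if_distrib cong: if_cong)
  finally show ?thesis
    by (simp add: power2_eq_square sum_distrib_left algebra_simps)
qed

(* The minorant is concave in t, and its average over the random sample depends only on
   the mean and the variance of t. *)
lemma min_ge_quadratic_minorant:
  fixes t V P :: real
  assumes "0 < P" "199/200 * P \<le> V"
  shows "t / 20 - (t - V / 2)\<^sup>2 / P \<le> min (t / 20) (V - t - P / 10)"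
proof -
  have "199 / 200 * P * P \<le> V * P"
    using assms by (intro mult_right_mono) auto
  then have "0 \<le> (t - V / 2 - 21 / 40 * P)\<^sup>2 + 19 / 40 * (V * P - 199 / 200 * P * P) + 97 / 1000 * P * P"
    by (intro add_nonneg_nonneg) (auto simp: algebra_simps)
  also have "\<dots> = P * (V - t - P / 10) - (P * t / 20 - (t - V / 2)\<^sup>2)"
    by (simp add: power2_eq_square algebra_simps)
  finally have "P * t / 20 - (t - V / 2)\<^sup>2 \<le> P * (V - t - P / 10)"
    by simp
  then have "t / 20 - (t - V / 2)\<^sup>2 / P \<le> V - t - P / 10"
    using assms(1) by (simp add: field_simps)
  then show ?thesis
    using assms(1) by simp
qed

lemma sum_Pow_quadratic_minorant:
  fixes x :: "'a \<Rightarrow> real"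
  assumes "finite N" "W \<subseteq> N"
  shows "(\<Sum>S\<in>Pow N. sum x (W \<inter> S) / 20 - (sum x (W \<inter> S) - sum x W / 2)\<^sup>2 / P)
    = 2 ^ card N * (sum x W / 40 - (\<Sum>i\<in>W. (x i)\<^sup>2) / (4 * P))"
proof -
  have "(\<Sum>S\<in>Pow N. sum x (W \<inter> S) / 20 - (sum x (W \<inter> S) - sum x W / 2)\<^sup>2 / P)
      = (\<Sum>S\<in>Pow N. sum x (W \<inter> S)) / 20 - (\<Sum>S\<in>Pow N. (sum x (W \<inter> S) - sum x W / 2)\<^sup>2) / P"
    by (simp add: sum_subtractf sum_divide_distrib)
  also have "\<dots> = 2 ^ card N * sum x W / 2 / 20 - 2 ^ card N * (\<Sum>i\<in>W. (x i)\<^sup>2) / 4 / P"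
    using assms by (simp add: sum_Pow_sum_Int sum_Pow_sum_Int_deviation_squared)
  finally show ?thesis
    by (simp add: field_simps)
qed

lemma grand_bundle_welfare_nonneg: "0 \<le> grand_bundle_welfare x d m n"
  unfolding grand_bundle_welfare_def by (intro Max_ge) auto

lemma value_le_grand_bundle_welfare:
  assumes "i < n" "d i \<le> m"
  shows "x i \<le> grand_bundle_welfare x d m n"
proof -
  have "val x d i m \<le> grand_bundle_welfare x d m n"
    unfolding grand_bundle_welfare_def using assms(1) by (intro Max_ge) auto
  then show ?thesis
    using assms(2) by (simp add: val_def)
qed

lemma seq_welfare_nonneg:
  assumes "\<forall>i\<in>set L. 0 \<le> x i"
  shows "0 \<le> seq_welfare x d ch L r"
  using assms by (induction L arbitrary: r) (auto simp: val_def)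

lemma preferred_choice_le:
  "preferred_choice x d n p ch \<Longrightarrow> i < n \<Longrightarrow> ch i r \<le> r"
  unfolding preferred_choice_def by blast

lemma preferred_choice_utility_ge:
  "preferred_choice x d n p ch \<Longrightarrow> i < n \<Longrightarrow> q \<le> r \<Longrightarrow>
    val x d i q - p * real q \<le> val x d i (ch i r) - p * real (ch i r)"
  unfolding preferred_choice_def by blast

lemma preferred_choice_utility_nonneg:
  assumes "preferred_choice x d n p ch" "i < n" "1 \<le> d i"
  shows "0 \<le> val x d i (ch i r) - p * real (ch i r)"
  using preferred_choice_utility_ge[OF assms(1,2), of 0 r] assms(3) by (simp add: val_def)

lemma preferred_choice_utility_ge_demand:
  assumes "preferred_choice x d n p ch" "i < n" "d i \<le> r"
  shows "x i - p * real (d i) \<le> val x d i (ch i r) - p * real (ch i r)"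
  using preferred_choice_utility_ge[OF assms] by (simp add: val_def)

lemma sum_set_Cons_Int:
  assumes "i \<notin> set L"
  shows "(\<Sum>j\<in>set (i # L) \<inter> B. f j) = (if i \<in> B then f i else 0) + (\<Sum>j\<in>set L \<inter> B. f j)"
  using assms by (cases "i \<in> B") (simp_all add: Int_insert_left)

(* Welfare is revenue plus the buyers' utilities, all nonnegative. Either the supply falls
   below k, so at least r - k items were sold at price p, or each bidder of B could still
   afford her demand, so her utility is at least x i - p * d i. *)
lemma seq_welfare_ge_min:
  assumes pc: "preferred_choice x d n p ch" and p: "0 \<le> p"
    and xd: "\<forall>i<n. 0 \<le> x i \<and> 1 \<le> d i" and Bk: "\<forall>i\<in>B. d i \<le> k"
    and "set L \<subseteq> {..<n}" "distinct L"
  shows "min (p * (real r - real k)) (\<Sum>i\<in>set L \<inter> B. x i - p * real (d i))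
    \<le> seq_welfare x d ch L r"
  using assms(5,6)
proof (induction L arbitrary: r)
  case Nil
  then show ?case by (simp add: min_def)
next
  case (Cons i L)
  define q where "q = ch i r"
  define u where "u = val x d i q - p * real q"
  define c where "c = (if i \<in> B then x i - p * real (d i) else 0)"
  have i: "i < n" "i \<notin> set L"
    using Cons.prems by auto
  have q: "q \<le> r"
    unfolding q_def using preferred_choice_le[OF pc i(1)] .
  have u: "0 \<le> u"
    unfolding u_def q_def using preferred_choice_utility_nonneg[OF pc i(1)] xd i(1) by blast
  have IH: "min (p * (real r - real q - real k)) (\<Sum>i\<in>set L \<inter> B. x i - p * real (d i))
      \<le> seq_welfare x d ch L (r - q)"
    using Cons.IH[of "r - q"] Cons.prems q by (simp add: of_nat_diff)
  have seq: "seq_welfare x d ch (i # L) r = u + p * real q + seq_welfare x d ch L (r - q)"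
    by (simp add: u_def q_def)
  show ?case
  proof (cases "r < k")
    case True
    then have "p * (real r - real k) \<le> 0"
      using p by (simp add: mult_nonneg_nonpos)
    moreover have "0 \<le> seq_welfare x d ch (i # L) r"
      using Cons.prems xd by (intro seq_welfare_nonneg) auto
    ultimately show ?thesis
      by linarith
  next
    case False
    then have "c \<le> u"
      using preferred_choice_utility_ge_demand[OF pc i(1), of r] Bk u
      by (auto simp: c_def u_def q_def)
    moreover have "0 \<le> p * real q"
      using p by simp
    ultimately show ?thesis
      using IH u unfolding seq sum_set_Cons_Int[OF i(2)] c_def[symmetric] min_def
      by (auto simp: algebra_simps split: if_splits)
  qed
qed

lemma posted_price_welfare_ge_min:
  assumes "1 \<le> m" and xd: "\<forall>i<n. 0 \<le> x i \<and> 1 \<le> d i"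
    and S: "S \<subseteq> {..<n}" and L: "distinct L" "set L = {..<n} - S"
    and pc: "preferred_choice x d n (price x d m S) c"
    and W: "W \<subseteq> {..<n}" "sum d W \<le> m" "\<forall>i\<in>W. 2 * d i \<le> m"
  shows "min (sum x (W \<inter> S) / 20) (sum x (W - S) - opt_on x d m {..<n} / 10)
    \<le> seq_welfare x d c L m"
proof -
  define p where "p = price x d m S"
  have fin: "finite S" "finite W"
    using S W(1) finite_subset by blast+
  have d1: "\<forall>i\<in>S. 1 \<le> d i"
    using S xd by auto
  have demand_le: "sum d V \<le> m" if "V \<subseteq> W" for V
    using sum_mono2[OF fin(2) that, of d] W(2) by linarith
  have T_le: "sum x (W \<inter> S) \<le> opt_on x d m S"
    using S d1 fin(1) demand_le by (intro sum_le_opt_on) auto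
  have opt_le: "opt_on x d m S \<le> opt_on x d m {..<n}"
    using S xd by (intro opt_on_mono) auto
  have p_m: "p * real m = opt_on x d m S / 10"
    using assms(1) by (simp add: p_def price_def)
  have p: "0 \<le> p"
    using opt_on_nonneg[OF fin(1) d1] assms(1) by (simp add: p_def price_def)
  have "min (p * (real m - real (m div 2))) (\<Sum>i\<in>set L \<inter> W. x i - p * real (d i))
      \<le> seq_welfare x d c L m"
    using L S W(3) by (intro seq_welfare_ge_min[OF pc[folded p_def] p xd]) auto
  moreover have "sum x (W \<inter> S) / 20 \<le> p * (real m - real (m div 2))"
  proof -
    have "real m / 2 \<le> real m - real (m div 2)"
      by linarith
    then have "p * (real m / 2) \<le> p * (real m - real (m div 2))"
      using p by (rule mult_left_mono)
    then show ?thesis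
      using p_m T_le by simp
  qed
  moreover have "sum x (W - S) - opt_on x d m {..<n} / 10 \<le> (\<Sum>i\<in>set L \<inter> W. x i - p * real (d i))"
  proof -
    have "set L \<inter> W = W - S"
      using L(2) W(1) by auto
    moreover have "p * real (sum d (W - S)) \<le> p * real m"
      using demand_le[of "W - S"] p by (intro mult_left_mono) (auto simp del: of_nat_sum)
    ultimately show ?thesis
      using p_m opt_le by (simp add: sum_subtractf sum_distrib_left)
  qed
  ultimately show ?thesis
    by linarith
qed

lemma posted_price_phase_ge:
  assumes m: "1 \<le> m" and xd: "\<forall>i<n. 0 \<le> x i \<and> 1 \<le> d i"
    and ord: "\<forall>S \<subseteq> {..<n}. distinct (ord S) \<and> set (ord S) = {..<n} - S"
    and ch: "\<forall>S \<subseteq> {..<n}. preferred_choice x d n (price x d m S) (ch S)"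
    and opt_pos: "0 < opt_on x d m {..<n}"
    and small: "\<forall>i<n. x i \<le> opt_on x d m {..<n} / 200"
  shows "opt_on x d m {..<n} / 200 \<le> (\<Sum>S\<in>Pow {..<n}. (1/2)^n * seq_welfare x d (ch S) (ord S) m)"
proof -
  define P where "P = opt_on x d m {..<n}"
  obtain W where W: "W \<subseteq> {..<n}" "sum d W \<le> m" "\<forall>i\<in>W. 2 * d i \<le> m"
    and V_ge: "P - P / 200 \<le> sum x W"
    using opt_on_small_demand_winners[of "{..<n}" "P / 200" x d m] small opt_pos unfolding P_def by auto
  define V where "V = sum x W"
  define Q where "Q = (\<Sum>i\<in>W. (x i)\<^sup>2)"
  define T where "T S = sum x (W \<inter> S)" for S
  have fin: "finite W"
    using W(1) finite_subset by blast
  have sample: "T S / 20 - (T S - V / 2)\<^sup>2 / P \<le> seq_welfare x d (ch S) (ord S) m"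
    if "S \<in> Pow {..<n}" for S
  proof -
    have "V - T S = sum x (W - S)"
      unfolding V_def T_def using sum.Int_Diff[OF fin, of x S] by simp
    then have "T S / 20 - (T S - V / 2)\<^sup>2 / P \<le> min (T S / 20) (sum x (W - S) - P / 10)"
      using min_ge_quadratic_minorant[of P V "T S"] opt_pos V_ge unfolding P_def V_def by auto
    also have "\<dots> \<le> seq_welfare x d (ch S) (ord S) m"
      unfolding T_def P_def using that m xd ord ch W by (intro posted_price_welfare_ge_min) auto
    finally show ?thesis .
  qed
  have "Q \<le> (\<Sum>i\<in>W. P / 200 * x i)"
    unfolding Q_def power2_eq_square using small W(1) xd unfolding P_def
    by (intro sum_mono mult_right_mono) auto
  then have Q_le: "Q \<le> P / 200 * V"
    by (simp add: V_def sum_distrib_left)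
  have "V / 40 - Q / (4 * P) = (1/2)^n * (\<Sum>S\<in>Pow {..<n}. T S / 20 - (T S - V / 2)\<^sup>2 / P)"
    unfolding T_def V_def Q_def using sum_Pow_quadratic_minorant[of "{..<n}" W x P] W(1)
    by (simp add: power_one_over)
  also have "\<dots> \<le> (1/2)^n * (\<Sum>S\<in>Pow {..<n}. seq_welfare x d (ch S) (ord S) m)"
    using sample by (intro mult_left_mono sum_mono) auto
  finally have "V / 40 - Q / (4 * P) \<le> (\<Sum>S\<in>Pow {..<n}. (1/2)^n * seq_welfare x d (ch S) (ord S) m)"
    by (simp add: sum_distrib_left)
  moreover have "Q / (4 * P) \<le> V / 800"
    using Q_le opt_pos unfolding P_def by (simp add: field_simps)
  ultimately show ?thesis
    using V_ge opt_pos unfolding P_def V_def by linarith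
qed

theorem lemma3p5:
  fixes n m :: nat and x :: "nat \<Rightarrow> real" and d :: "nat \<Rightarrow> nat"
    and ord :: "nat set \<Rightarrow> nat list" and ch :: "nat set \<Rightarrow> nat \<Rightarrow> nat \<Rightarrow> nat"
  assumes "m \<ge> 1"
    and "\<forall>i<n. 0 \<le> x i \<and> 1 \<le> d i \<and> d i \<le> m"
    and "\<forall>S \<subseteq> {..<n}. distinct (ord S) \<and> set (ord S) = {..<n} - S"
    and "\<forall>S \<subseteq> {..<n}. preferred_choice x d n (price x d m S) (ch S)"
  shows "opt_on x d m {..<n} / 400 \<le> expected_welfare x d m n ord ch"
proof -
  define P where "P = opt_on x d m {..<n}"
  define G where "G = grand_bundle_welfare x d m n"
  define E where "E = (\<Sum>S\<in>Pow {..<n}. (1/2)^n * seq_welfare x d (ch S) (ord S) m)"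
  have xd: "\<forall>i<n. 0 \<le> x i \<and> 1 \<le> d i"
    using assms(2) by auto
  have "0 \<le> G"
    unfolding G_def by (rule grand_bundle_welfare_nonneg)
  moreover have "0 \<le> E"
    unfolding E_def using assms(3) xd by (intro sum_nonneg mult_nonneg_nonneg seq_welfare_nonneg) auto
  moreover have "P / 200 \<le> G \<or> P / 200 \<le> E" if "0 < P"
  proof (cases "\<exists>i<n. P / 200 \<le> x i")
    case True
    then show ?thesis
      using value_le_grand_bundle_welfare assms(2) unfolding G_def by (meson order_trans)
  next
    case False
    then show ?thesis
      using posted_price_phase_ge[OF assms(1) xd assms(3,4)] that unfolding P_def E_def by force
  qed
  ultimately show ?thesis
    unfolding P_def G_def E_def expected_welfare_def by linarith
qed

end
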